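(* Let $\mathcal{A}_1$ and $\mathcal{A}_2$ be two NFAs over a finite alphabet $A$. Then $L(\mathcal{A}_1)$ and $L(\mathcal{A}_2)$ are not PT-separable if and only if there exists a factorization pattern $(\vec u,\vec B)$ such that both $\mathcal{A}_1$ and $\mathcal{A}_2$ admit a $(\vec u,\vec B)$-path.
   Context: Piecewise testable (PT) languages over $A$ are finite Boolean combinations of languages $A^*a_1A^*\cdots A^*a_nA^*$ ($a_i\in A$); $L_1,L_2$ are PT-separable if some PT language $L$ satisfies $L_1\subseteq L$ and $L\cap L_2=\varnothing$. For states $p,q$ of an NFA and $B\subseteq A$: $p\xrightarrow{\subseteq B}q$ denotes a path (possibly of length $0$) from $p$ to $q$ all of whose transitions are labeled by letters of $B$; $p\xrightarrow{=B}q$ denotes such a path in which moreover every letter of $B$ occurs at least once. A factorization pattern is a pair $(\vec u,\vec B)$ with $\vec u=(u_0,\dots,u_p)$, $u_i\in A^*$, and $\vec B=(B_1,\dots,B_p)$, each $B_i$ a nonempty subset of $A$ ($p\ge 0$). A $(\vec u,\vec B)$-path in an NFA is a path from an initial state to a final state of the form $s_0\xrightarrow{u_0}p_1\xrightarrow{\subseteq B_1}q_1\xrightarrow{=B_1}q_1\xrightarrow{\subseteq B_1}r_1\xrightarrow{u_1}p_2\xrightarrow{\subseteq B_2}q_2\xrightarrow{=B_2}q_2\xrightarrow{\subseteq B_2}r_2\xrightarrow{u_2}\cdots\xrightarrow{u_{p-1}}p_p\xrightarrow{\subseteq B_p}q_p\xrightarrow{=B_p}q_p\xrightarrow{\subseteq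 B_p}r_p\xrightarrow{u_p}f$, i.e. for each $i$ a $(=B_i)$-loop around some state $q_i$, reached and left by $(\subseteq B_i)$-paths. *)

theory Defs
  imports Main
begin

(* Alphabet: a finite type 'a (A = UNIV). Words: 'a list. *)

record ('s, 'a) nfa =
  states :: "'s set"
  init   :: "'s set"
  final  :: "'s set"
  trans  :: "('s \<times> 'a \<times> 's) set"

definition nfa_wf :: "('s, 'a) nfa \<Rightarrow> bool" where
  "nfa_wf M \<longleftrightarrow> finite (states M) \<and> init M \<subseteq> states M \<and> final M \<subseteq> states M
     \<and> (\<forall>(p, a, q) \<in> trans M. p \<in> states M \<and> q \<in> states M)"

inductive run :: "('s, 'a) nfa \<Rightarrow> 's \<Rightarrow> 'a list \<Rightarrow> 's \<Rightarrow> bool" for M where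
  run_nil: "run M p [] p"
| run_cons: "(p, a, r) \<in> trans M \<Longrightarrow> run M r w q \<Longrightarrow> run M p (a # w) q"

definition lang :: "('s, 'a) nfa \<Rightarrow> 'a list set" where
  "lang M = {w. \<exists>s \<in> init M. \<exists>f \<in> final M. run M s w f}"

fun pt_basic :: "'a list \<Rightarrow> 'a list set" where
  "pt_basic [] = UNIV"
| "pt_basic (a # as) = {x @ [a] @ y | x y. y \<in> pt_basic as}"

inductive PT :: "'a list set \<Rightarrow> bool" where
  PT_basic: "PT (pt_basic as)"
| PT_compl: "PT L \<Longrightarrow> PT (- L)"
| PT_union: "PT L \<Longrightarrow> PT K \<Longrightarrow> PT (L \<union> K)"
| PT_inter: "PT L \<Longrightarrow> PT K \<Longrightarrow> PT (L \<inter> K)"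

definition PT_separable :: "'a list set \<Rightarrow> 'a list set \<Rightarrow> bool" where
  "PT_separable L1 L2 \<longleftrightarrow> (\<exists>L. PT L \<and> L1 \<subseteq> L \<and> L \<inter> L2 = {})"

definition sub_path :: "('s, 'a) nfa \<Rightarrow> 's \<Rightarrow> 'a set \<Rightarrow> 's \<Rightarrow> bool" where
  "sub_path M p B q \<longleftrightarrow> (\<exists>w. set w \<subseteq> B \<and> run M p w q)"

definition eq_path :: "('s, 'a) nfa \<Rightarrow> 's \<Rightarrow> 'a set \<Rightarrow> 's \<Rightarrow> bool" where
  "eq_path M p B q \<longleftrightarrow> (\<exists>w. set w = B \<and> run M p w q)"

definition fact_pattern :: "'a list list \<Rightarrow> 'a set list \<Rightarrow> bool" where
  "fact_pattern us Bs \<longleftrightarrow> length us = length Bs + 1 \<and> (\<forall>B \<in> set Bs. B \<noteq> {})"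

fun pattern_path :: "('s, 'a) nfa \<Rightarrow> 's \<Rightarrow> 'a list list \<Rightarrow> 'a set list \<Rightarrow> bool" where
  "pattern_path M s [u] [] = (\<exists>f \<in> final M. run M s u f)"
| "pattern_path M s (u # us) (B # Bs) =
     (\<exists>p q r. run M s u p \<and> sub_path M p B q \<and> eq_path M q B q \<and> sub_path M q B r
              \<and> pattern_path M r us Bs)"
| "pattern_path M s _ _ = False"

definition admits_pattern_path :: "('s, 'a) nfa \<Rightarrow> 'a list list \<Rightarrow> 'a set list \<Rightarrow> bool" where
  "admits_pattern_path M us Bs \<longleftrightarrow> (\<exists>s \<in> init M. pattern_path M s us Bs)"

end

theory Submission
  imports Defs "HOL-Library.Sublist" "HOL-Library.Cardinality"
begin

text \<open>
  Call two words n-equivalent if they have the same subsequences of length at most n. Every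
  PT language is a union of classes of some n-equivalence, and each class is PT, so L1 and L2 are
  inseparable iff for every n some w1 \<in> L1 and w2 \<in> L2 are n-equivalent.

  A common pattern path produces such words: pumping the (=B)-loops makes every factor between
  the u_i contain all words of length at most n over B_i as subsequences, and two words
  factorized in this way along the same pattern are n-equivalent.

  Conversely, take n-equivalent w1 \<in> L1, w2 \<in> L2 for a very large n and peel them from the left.
  Either w1 starts with a maximal prefix that is universal over its own alphabet B, and then w2
  starts with a universal block over the same B, or the first letters agree. The remainders stay
  (n-1)-equivalent, and the peeled piece is not absorbed by the remainder of w1 (absorption would
  make that prefix extendable), so the number of short subsequences of w1 drops in each step.
  This yields a common factorization of w1 and w2. Finally, an automaton reading a universal
  factor over B passes through more blocks containing all of B than it has states, so it repeats
  a state between two block boundaries, which is the required (=B)-loop.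
\<close>

section \<open>Short subsequences\<close>

definition short_subseqs :: "nat \<Rightarrow> 'a list \<Rightarrow> 'a list set" where
  "short_subseqs n w = {t. subseq t w \<and> length t \<le> n}"

lemma short_subseqs_eqD:
  "short_subseqs n w1 = short_subseqs n w2 \<Longrightarrow> length t \<le> n \<Longrightarrow> subseq t w1 \<longleftrightarrow> subseq t w2"
  unfolding short_subseqs_def by (auto simp: set_eq_iff)

lemma short_subseqs_eqI:
  "(\<And>t. length t \<le> n \<Longrightarrow> subseq t w1 \<longleftrightarrow> subseq t w2) \<Longrightarrow> short_subseqs n w1 = short_subseqs n w2"
  unfolding short_subseqs_def by blast

lemma short_subseqs_eq_mono:
  "short_subseqs n w1 = short_subseqs n w2 \<Longrightarrow> k \<le> n \<Longrightarrow> short_subseqs k w1 = short_subseqs k w2"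
  by (rule short_subseqs_eqI) (meson le_trans short_subseqs_eqD)

lemma short_subseqs_eq_append:
  assumes "short_subseqs k x = short_subseqs k x'" "short_subseqs k y = short_subseqs k y'"
  shows "short_subseqs k (x @ y) = short_subseqs k (x' @ y')"
proof -
  have "subseq t (x' @ y')"
    if "short_subseqs k x = short_subseqs k x'" "short_subseqs k y = short_subseqs k y'"
      "subseq t (x @ y)" "length t \<le> k" for t x x' y y' :: "'a list"
  proof -
    from that(3) obtain t1 t2 where t: "t = t1 @ t2" "subseq t1 x" "subseq t2 y"
      by (auto elim: subseq_appendE)
    then have "subseq t1 x'" "subseq t2 y'"
      using short_subseqs_eqD[OF that(1), of t1] short_subseqs_eqD[OF that(2), of t2] that(4)
      by auto
    then show ?thesis using t by (simp add: list_emb_append_mono)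
  qed
  from this[OF assms] this[OF assms[symmetric]] show ?thesis
    by (intro short_subseqs_eqI) blast
qed

lemma short_subseqs_eq_Cons_cancel:
  "short_subseqs (Suc m) (d # R1) = short_subseqs (Suc m) (d # R2) \<Longrightarrow>
   short_subseqs m R1 = short_subseqs m R2"
proof (rule short_subseqs_eqI)
  fix t :: "'a list" assume "short_subseqs (Suc m) (d # R1) = short_subseqs (Suc m) (d # R2)" "length t \<le> m"
  then show "subseq t R1 \<longleftrightarrow> subseq t R2"
    using short_subseqs_eqD[of "Suc m" "d # R1" "d # R2" "d # t"] by simp
qed

lemma finite_lists_length_le_UNIV: "finite {t :: 'a::finite list. length t \<le> n}"
  using finite_lists_length_le[of "UNIV :: 'a set" n] by simp

lemma finite_short_subseqs: "finite (short_subseqs n (w :: 'a::finite list))"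
  by (rule finite_subset[OF _ finite_lists_length_le_UNIV]) (auto simp: short_subseqs_def)

lemma subseq_set: "subseq t v \<Longrightarrow> set t \<subseteq> set v"
  by (induction rule: list_emb.induct) auto

lemma obtain_enumeration:
  fixes B :: "'a::finite set"
  obtains z where "set z = B" "length z \<le> CARD('a)"
proof -
  obtain z where "set z = B" "distinct z" using finite_distinct_list[of B] by auto
  moreover have "card B \<le> CARD('a)" by (rule card_mono) auto
  ultimately show ?thesis using that distinct_card by metis
qed

section \<open>Piecewise testable languages and short subsequences\<close>

definition saturated :: "nat \<Rightarrow> 'a list set \<Rightarrow> bool" where
  "saturated n L \<longleftrightarrow> (\<forall>w w'. short_subseqs n w = short_subseqs n w' \<longrightarrow> (w \<in> L \<longleftrightarrow> w' \<in> L))"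

lemma saturated_mono: "saturated k L \<Longrightarrow> k \<le> n \<Longrightarrow> saturated n L"
  unfolding saturated_def by (meson short_subseqs_eq_mono)

lemma pt_basic_eq: "pt_basic as = {w. subseq as w}"
proof (induction as)
  case (Cons a as)
  show ?case
  proof (intro set_eqI iffI)
    fix w assume "w \<in> pt_basic (a # as)"
    then obtain x y where "w = x @ [a] @ y" "subseq as y" using Cons by auto
    then show "w \<in> {w. subseq (a # as) w}" by (simp add: subseq_drop_many)
  next
    fix w assume "w \<in> {w. subseq (a # as) w}"
    then obtain us v vs where "w = us @ v # vs" "a = v" "subseq as vs"
      using list_emb_ConsD[of "(=)" a as w] by auto
    then show "w \<in> pt_basic (a # as)" using Cons by auto
  qed
qed simp

lemma PT_saturated: "PT L \<Longrightarrow> \<exists>n. saturated n L"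
proof (induction rule: PT.induct)
  case (PT_basic as)
  show ?case
    by (rule exI[of _ "length as"]) (auto simp: saturated_def pt_basic_eq dest: short_subseqs_eqD)
next
  case (PT_compl L)
  then show ?case by (auto simp: saturated_def)
next
  case (PT_union L K)
  then obtain n1 n2 where "saturated n1 L" "saturated n2 K" by blast
  then have "saturated (max n1 n2) L" "saturated (max n1 n2) K"
    by (auto intro: saturated_mono)
  then show ?case unfolding saturated_def by blast
next
  case (PT_inter L K)
  then obtain n1 n2 where "saturated n1 L" "saturated n2 K" by blast
  then have "saturated (max n1 n2) L" "saturated (max n1 n2) K"
    by (auto intro: saturated_mono)
  then show ?case unfolding saturated_def by blast
qed

lemma PT_UNIV: "PT UNIV"
  using PT_basic[of "[]"] by simp

lemma PT_Inter: "finite F \<Longrightarrow> \<forall>L\<in>F. PT L \<Longrightarrow> PT (\<Inter>F)"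
  by (induction F rule: finite_induct) (auto intro: PT_UNIV PT_inter)

lemma PT_empty: "PT {}"
  using PT_compl[OF PT_UNIV] by simp

lemma PT_Union: "finite F \<Longrightarrow> \<forall>L\<in>F. PT L \<Longrightarrow> PT (\<Union>F)"
  by (induction F rule: finite_induct) (auto intro: PT_empty PT_union)

lemma short_subseqs_class_eq_Inter:
  "{w. short_subseqs n w = short_subseqs n w0} =
    (\<Inter>s\<in>{t. length t \<le> n}. if subseq s w0 then pt_basic s else - pt_basic s)"
proof (rule set_eqI)
  fix w
  have "short_subseqs n w = short_subseqs n w0 \<longleftrightarrow> (\<forall>s. length s \<le> n \<longrightarrow> (subseq s w \<longleftrightarrow> subseq s w0))"
    by (meson short_subseqs_eqD short_subseqs_eqI)
  then show "w \<in> {w. short_subseqs n w = short_subseqs n w0} \<longleftrightarrow>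
    w \<in> (\<Inter>s\<in>{t. length t \<le> n}. if subseq s w0 then pt_basic s else - pt_basic s)"
    by (auto simp: pt_basic_eq)
qed

lemma PT_short_subseqs_class:
  fixes w0 :: "'a::finite list"
  shows "PT {w. short_subseqs n w = short_subseqs n w0}"
  unfolding short_subseqs_class_eq_Inter
  by (rule PT_Inter) (auto intro: finite_lists_length_le_UNIV PT_basic PT_compl)

lemma not_PT_separable_imp_short_subseqs_eq:
  fixes L1 L2 :: "'a::finite list set"
  assumes "\<not> PT_separable L1 L2"
  obtains w1 w2 where "w1 \<in> L1" "w2 \<in> L2" "short_subseqs n w1 = short_subseqs n w2"
proof -
  define L where "L = (\<Union>T\<in>short_subseqs n ` L1. {w. short_subseqs n w = T})"
  have "finite (short_subseqs n ` L1)"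
    by (rule finite_subset[where B = "Pow {t. length t \<le> n}"])
      (auto simp: short_subseqs_def finite_lists_length_le_UNIV)
  then have "finite ((\<lambda>T. {w. short_subseqs n w = T}) ` short_subseqs n ` L1)"
    by (rule finite_imageI)
  then have "PT L"
    unfolding L_def by (intro PT_Union) (auto intro: PT_short_subseqs_class)
  moreover have "L1 \<subseteq> L" unfolding L_def by auto
  ultimately have "L \<inter> L2 \<noteq> {}" using assms unfolding PT_separable_def by blast
  then show ?thesis using that unfolding L_def by auto
qed

lemma run_Nil [simp]: "run M p [] q \<longleftrightarrow> p = q"
  by (subst run.simps) auto

lemma run_Cons [simp]: "run M p (a # w) q \<longleftrightarrow> (\<exists>r. (p, a, r) \<in> trans M \<and> run M r w q)"
  by (subst run.simps) auto

lemma run_append: "run M p (x @ y) q \<longleftrightarrow> (\<exists>r. run M p x r \<and> run M r y q)"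
  by (induction x arbitrary: p) auto

lemma run_concat_replicate: "run M q y q \<Longrightarrow> run M q (concat (replicate k y)) q"
  by (induction k) (auto simp: run_append)

lemma run_target_in_states: "nfa_wf M \<Longrightarrow> run M p w q \<Longrightarrow> w \<noteq> [] \<Longrightarrow> q \<in> states M"
proof (induction w arbitrary: p)
  case (Cons a w)
  then obtain r where "(p, a, r) \<in> trans M" "run M r w q" by auto
  with Cons show ?case by (cases w) (auto simp: nfa_wf_def)
qed simp

lemma sub_path_refl: "sub_path M p B p"
  unfolding sub_path_def by (auto intro: exI[of _ "[]"])

lemma sub_path_extend: "sub_path M p B q \<Longrightarrow> run M q x r \<Longrightarrow> set x \<subseteq> B \<Longrightarrow> sub_path M p B r"
  unfolding sub_path_def by (metis run_append set_append le_sup_iff)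

lemma eq_path_extend: "eq_path M p B q \<Longrightarrow> run M q x r \<Longrightarrow> set x \<subseteq> B \<Longrightarrow> eq_path M p B r"
  unfolding eq_path_def by (metis run_append set_append sup.absorb1)

section \<open>Universal words and factorizations\<close>

definition universal :: "nat \<Rightarrow> 'a set \<Rightarrow> 'a list \<Rightarrow> bool" where
  "universal k B v \<longleftrightarrow> set v = B \<and> (\<forall>t. set t \<subseteq> B \<longrightarrow> length t \<le> k \<longrightarrow> subseq t v)"

lemma universal_mono: "universal k B v \<Longrightarrow> k' \<le> k \<Longrightarrow> universal k' B v"
  unfolding universal_def by auto

lemma universal_append_left: "universal k B w \<Longrightarrow> set v \<subseteq> B \<Longrightarrow> universal k B (v @ w)"
  unfolding universal_def by (auto simp: subseq_drop_many)

lemma universal_append_right: "universal k B v \<Longrightarrow> set w \<subseteq> B \<Longrightarrow> universal k B (v @ w)"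
  unfolding universal_def by (auto simp: subseq_rev_drop_many)

lemma universal_short_subseqs:
  "universal k B v \<Longrightarrow> short_subseqs k v = {t. set t \<subseteq> B \<and> length t \<le> k}"
  unfolding universal_def short_subseqs_def using subseq_set by blast

lemma subseq_concat_replicate:
  "set t \<subseteq> set y \<Longrightarrow> length t \<le> k \<Longrightarrow> subseq t (concat (replicate k y))"
proof (induction t arbitrary: k)
  case (Cons a t)
  then obtain k' where k: "k = Suc k'" by (cases k) auto
  have "subseq ([a] @ t) (y @ concat (replicate k' y))"
    using Cons k by (intro list_emb_append_mono) (auto simp: subseq_singleton_left)
  then show ?case using k by simp
qed simp

lemma universal_concat_replicate:
  assumes "set x \<subseteq> set y" "set z \<subseteq> set y"
  shows "universal k (set y) (x @ concat (replicate (Suc k) y) @ z)"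
  unfolding universal_def
proof (intro conjI allI impI)
  fix t assume "set t \<subseteq> set y" "length t \<le> k"
  then have "subseq t (concat (replicate (Suc k) y))"
    by (intro subseq_concat_replicate) auto
  then show "subseq t (x @ concat (replicate (Suc k) y) @ z)"
    by (intro subseq_drop_many subseq_rev_drop_many)
qed (use assms in auto)

fun factorizes :: "nat \<Rightarrow> 'a list list \<Rightarrow> 'a set list \<Rightarrow> 'a list \<Rightarrow> bool" where
  "factorizes k [u] [] w \<longleftrightarrow> w = u"
| "factorizes k (u # us) (B # Bs) w \<longleftrightarrow>
     (\<exists>v w'. w = u @ v @ w' \<and> universal k B v \<and> factorizes k us Bs w')"
| "factorizes k _ _ w \<longleftrightarrow> False"

lemma factorizes_length: "factorizes k us Bs w \<Longrightarrow> length us = length Bs + 1"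
  by (induction k us Bs w rule: factorizes.induct) auto

lemma factorizes_mono: "factorizes k us Bs w \<Longrightarrow> k' \<le> k \<Longrightarrow> factorizes k' us Bs w"
  by (induction k us Bs w rule: factorizes.induct) (auto intro: universal_mono)

lemma factorizes_Cons:
  "factorizes k us Bs w \<Longrightarrow> factorizes k ((d # hd us) # tl us) Bs (d # w)"
  by (induction k us Bs w rule: factorizes.induct) auto

lemma factorizes_universal_Cons:
  "universal k B v \<Longrightarrow> factorizes k us Bs w \<Longrightarrow> factorizes k ([] # us) (B # Bs) (v @ w)"
  by (cases us) auto

lemma factorizes_short_subseqs_eq:
  "factorizes k us Bs w \<Longrightarrow> factorizes k us Bs w' \<Longrightarrow> short_subseqs k w = short_subseqs k w'"
proof (induction k us Bs w arbitrary: w' rule: factorizes.induct)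
  case (2 k u us B Bs w)
  from "2.prems" obtain v x v' x' where
    w: "w = u @ v @ x" "universal k B v" "factorizes k us Bs x"
    and w': "w' = u @ v' @ x'" "universal k B v'" "factorizes k us Bs x'"
    by auto
  have "short_subseqs k v = short_subseqs k v'"
    using w(2) w'(2) by (simp add: universal_short_subseqs)
  moreover have "short_subseqs k x = short_subseqs k x'"
    using "2.IH" w(3) w'(3) by blast
  ultimately show ?case
    unfolding w(1) w'(1) by (intro short_subseqs_eq_append refl)
qed auto

section \<open>Common pattern paths prevent separation\<close>

lemma pattern_path_imp_factorizes:
  "pattern_path M s us Bs \<Longrightarrow> \<exists>w f. f \<in> final M \<and> run M s w f \<and> factorizes k us Bs w"
proof (induction M s us Bs rule: pattern_path.induct)
  case (2 M s u us B Bs)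
  from "2.prems" obtain p q r where
    paths: "run M s u p" "sub_path M p B q" "eq_path M q B q" "sub_path M q B r"
    "pattern_path M r us Bs"
    by auto
  from "2.IH"[OF paths(5)] obtain w' f where
    f: "f \<in> final M" "run M r w' f" "factorizes k us Bs w'"
    by blast
  from paths obtain x y z where
    "set x \<subseteq> B" "run M p x q" "set y = B" "run M q y q" "set z \<subseteq> B" "run M q z r"
    unfolding sub_path_def eq_path_def by blast
  moreover define v where "v = x @ concat (replicate (Suc k) y) @ z"
  ultimately have "run M p v r" "universal k B v"
    using run_concat_replicate[of M q y "Suc k"] universal_concat_replicate[of x y z k]
    by (auto simp: run_append simp del: replicate_Suc)
  then have "run M s (u @ v @ w') f" "factorizes k (u # us) (B # Bs) (u @ v @ w')"
    using paths(1) f by (auto simp: run_append)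
  with f(1) show ?case by blast
qed auto

lemma common_pattern_imp_not_PT_separable:
  fixes M1 :: "('s1, 'a::finite) nfa" and M2 :: "('s2, 'a) nfa"
  assumes "admits_pattern_path M1 us Bs" "admits_pattern_path M2 us Bs"
  shows "\<not> PT_separable (lang M1) (lang M2)"
proof
  assume "PT_separable (lang M1) (lang M2)"
  then obtain L where L: "lang M1 \<subseteq> L" "L \<inter> lang M2 = {}" "PT L"
    unfolding PT_separable_def by blast
  then obtain n where n: "saturated n L" using PT_saturated by blast
  obtain w1 w2 where w: "w1 \<in> lang M1" "w2 \<in> lang M2"
    "factorizes n us Bs w1" "factorizes n us Bs w2"
    using assms pattern_path_imp_factorizes[of M1 _ us Bs n] pattern_path_imp_factorizes[of M2 _ us Bs n]
    unfolding admits_pattern_path_def lang_def by blast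
  then show False
    using L n factorizes_short_subseqs_eq[OF w(3,4)] unfolding saturated_def by blast
qed

section \<open>Loops inside universal factors\<close>

text \<open>T is the set of earlier block boundaries; each of them reaches the current state p by a
  path using every letter of B. More blocks than states force a boundary to repeat.\<close>
lemma loop_among_blocks:
  assumes wf: "nfa_wf M" and B: "B \<noteq> {}"
  shows "run M p (concat xs @ rest) q \<Longrightarrow> \<forall>x\<in>set xs. set x = B \<Longrightarrow> set rest \<subseteq> B \<Longrightarrow>
    sub_path M p0 B p \<Longrightarrow> p \<in> insert p0 (states M) \<Longrightarrow> T \<subseteq> insert p0 (states M) \<Longrightarrow>
    \<forall>t\<in>T. sub_path M p0 B t \<and> eq_path M t B p \<Longrightarrow>
    card (insert p0 (states M)) < card T + length xs \<Longrightarrow>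
    \<exists>r. sub_path M p0 B r \<and> eq_path M r B r \<and> sub_path M r B q"
proof (induction xs arbitrary: p T)
  case Nil
  have "finite (insert p0 (states M))" using wf by (simp add: nfa_wf_def)
  then have "card T \<le> card (insert p0 (states M))" using Nil.prems(6) by (rule card_mono)
  then show ?case using Nil.prems(8) by simp
next
  case (Cons x xs)
  show ?case
  proof (cases "p \<in> T")
    case True
    have "set (concat (x # xs) @ rest) \<subseteq> B" using Cons.prems(2,3) by auto
    then have "sub_path M p B q" using Cons.prems(1) unfolding sub_path_def by blast
    then show ?thesis using True Cons.prems(4,7) by blast
  next
    case False
    from Cons.prems(1) obtain p' where p': "run M p x p'" "run M p' (concat xs @ rest) q"
      by (auto simp: run_append)
    have x: "set x = B" using Cons.prems(2) by simp
    then have "p' \<in> insert p0 (states M)" using run_target_in_states[OF wf p'(1)] B by auto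
    moreover have "sub_path M p0 B p'" using sub_path_extend[OF Cons.prems(4) p'(1)] x by simp
    moreover have inv: "\<forall>t\<in>insert p T. sub_path M p0 B t \<and> eq_path M t B p'"
    proof -
      have "eq_path M p B p'" using p'(1) x unfolding eq_path_def by blast
      moreover have "eq_path M t B p'" if "t \<in> T" for t
        using Cons.prems(7) that eq_path_extend[OF _ p'(1)] x by simp
      ultimately show ?thesis using Cons.prems(4,7) by blast
    qed
    moreover have "insert p T \<subseteq> insert p0 (states M)" using Cons.prems(5,6) by blast
    moreover have card: "card (insert p0 (states M)) < card (insert p T) + length xs"
    proof -
      have "finite T" using Cons.prems(6) wf finite_subset unfolding nfa_wf_def by blast
      then show ?thesis using Cons.prems(8) False by simp
    qed
    ultimately show ?thesis using Cons.IH[OF p'(2) _ Cons.prems(3) _ _ _ inv card] Cons.prems(2) by simp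
  qed
qed

lemma subseq_concat_replicate_imp_blocks:
  "subseq (concat (replicate n z)) v \<Longrightarrow>
   \<exists>xs rest. length xs = n \<and> v = concat xs @ rest \<and> (\<forall>x\<in>set xs. subseq z x)"
proof (induction n arbitrary: v)
  case 0
  show ?case by (intro exI[of _ "[]"] exI[of _ v]) simp
next
  case (Suc n)
  then have "subseq (z @ concat (replicate n z)) v" by simp
  then obtain x v' where v: "v = x @ v'" "subseq z x" "subseq (concat (replicate n z)) v'"
    using list_emb_appendD by blast
  from Suc.IH[OF v(3)] obtain xs rest where
    "length xs = n" "v' = concat xs @ rest" "\<forall>x\<in>set xs. subseq z x"
    by blast
  with v show ?case by (intro exI[of _ "x # xs"] exI[of _ rest]) auto
qed

lemma universal_run_has_loop:
  fixes M :: "('s, 'a::finite) nfa"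
  assumes wf: "nfa_wf M" and v: "universal k B v" and B: "B \<noteq> {}" and run: "run M p v q"
    and k: "CARD('a) * (card (states M) + 2) \<le> k"
  shows "\<exists>r. sub_path M p B r \<and> eq_path M r B r \<and> sub_path M r B q"
proof -
  let ?n = "card (states M) + 2"
  obtain z where z: "set z = B" "length z \<le> CARD('a)" by (rule obtain_enumeration)
  have "length (concat (replicate ?n z)) \<le> k"
    using mult_le_mono2[OF z(2), of ?n] k by (simp add: length_concat sum_list_replicate mult.commute)
  then have "subseq (concat (replicate ?n z)) v"
    using v z(1) unfolding universal_def by auto
  then obtain xs rest where xs: "length xs = ?n" "v = concat xs @ rest" "\<forall>x\<in>set xs. subseq z x"
    using subseq_concat_replicate_imp_blocks by blast
  have "set v = B" using v unfolding universal_def by simp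
  then have blocks: "\<forall>x\<in>set xs. set x = B" and rest: "set rest \<subseteq> B"
    using xs(2,3) z(1) subseq_set by fastforce+
  have "card (insert p (states M)) < card {} + length xs"
    using wf xs(1) by (simp add: nfa_wf_def card_insert_if)
  moreover have "run M p (concat xs @ rest) q" using run xs(2) by simp
  ultimately show ?thesis
    using loop_among_blocks[OF wf B _ blocks rest sub_path_refl, of _ _ "{}"] by simp
qed

lemma factorizes_imp_pattern_path:
  fixes M :: "('s, 'a::finite) nfa"
  assumes wf: "nfa_wf M"
  shows "factorizes k us Bs w \<Longrightarrow> CARD('a) * (card (states M) + 2) \<le> k \<Longrightarrow>
    \<forall>B\<in>set Bs. B \<noteq> {} \<Longrightarrow> run M s w f \<Longrightarrow> f \<in> final M \<Longrightarrow> pattern_path M s us Bs"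
proof (induction k us Bs w arbitrary: s rule: factorizes.induct)
  case (2 k u us B Bs w)
  from "2.prems"(1) obtain v w' where vw: "w = u @ v @ w'" "universal k B v" "factorizes k us Bs w'"
    by auto
  from "2.prems"(4) vw(1) obtain p r where pr: "run M s u p" "run M p v r" "run M r w' f"
    by (auto simp: run_append)
  have "B \<noteq> {}" "\<forall>B\<in>set Bs. B \<noteq> {}" using "2.prems"(3) by auto
  then have "\<exists>q. sub_path M p B q \<and> eq_path M q B q \<and> sub_path M q B r"
    "pattern_path M r us Bs"
    using universal_run_has_loop[OF wf vw(2) _ pr(2) "2.prems"(2)]
      "2.IH"[OF vw(3) "2.prems"(2) _ pr(3) "2.prems"(5)]
    by auto
  then show ?case using pr(1) by auto
qed auto

section \<open>Absorption\<close>

text \<open>If G absorbs B, a block over B in front of G is invisible to short subsequences.\<close>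
definition absorbs :: "nat \<Rightarrow> 'a set \<Rightarrow> 'a list \<Rightarrow> bool" where
  "absorbs N B G \<longleftrightarrow> (\<forall>b\<in>B. \<forall>t. subseq t G \<longrightarrow> length t < N \<longrightarrow> subseq (b # t) G)"

lemma absorbs_mono: "absorbs N B G \<Longrightarrow> N' \<le> N \<Longrightarrow> absorbs N' B G"
  unfolding absorbs_def by auto

lemma absorbs_subseq_append:
  "absorbs N B G \<Longrightarrow> set s \<subseteq> B \<Longrightarrow> subseq t G \<Longrightarrow> length s + length t \<le> N \<Longrightarrow> subseq (s @ t) G"
  by (induction s) (auto simp: absorbs_def)

lemma absorbs_split:
  fixes G :: "'a::finite list"
  assumes abs: "absorbs N B G" and N: "CARD('a) \<le> N"
  obtains P G' where "G = P @ G'" "B \<subseteq> set P" "absorbs (N - CARD('a)) (set P) G'"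
proof -
  obtain z where z: "set z = B" "length z \<le> CARD('a)" by (rule obtain_enumeration)
  have z_t: "subseq (z @ t) G" if "subseq t G" "length t \<le> N - CARD('a)" for t
    using absorbs_subseq_append[OF abs _ that(1)] z that(2) N by simp
  define i where "i = (LEAST i. subseq z (take i G))"
  have "subseq z (take (length G) G)" using z_t[of "[]"] by simp
  then have i: "subseq z (take i G)" unfolding i_def by (rule LeastI)
  \<comment> \<open>Cutting after the shortest prefix that contains z loses no short subsequence of G.\<close>
  have drop_i: "subseq t (drop i G)" if "subseq t G" "length t \<le> N - CARD('a)" for t
  proof -
    from z_t[OF that] obtain x y where xy: "G = x @ y" "subseq z x" "subseq t y"
      using list_emb_appendD by blast
    have "i \<le> length x" unfolding i_def using xy by (metis Least_le append_eq_conv_conj)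
    then have "y = drop (length x - i) (drop i G)" using xy(1) by simp
    then show ?thesis using xy(3) by (metis append_take_drop_id subseq_drop_many)
  qed
  have "absorbs (N - CARD('a)) (set (take i G)) (drop i G)"
    unfolding absorbs_def
  proof (intro ballI allI impI)
    fix b t assume "b \<in> set (take i G)" "subseq t (drop i G)" "length t < N - CARD('a)"
    moreover from this have "subseq ([b] @ t) (take i G @ drop i G)"
      by (intro list_emb_append_mono) (auto simp: subseq_singleton_left)
    ultimately show "subseq (b # t) (drop i G)" using drop_i[of "b # t"] by simp
  qed
  moreover have "B \<subseteq> set (take i G)" using i z(1) subseq_set by blast
  ultimately show ?thesis using that[of "take i G" "drop i G"] by simp
qed

lemma absorbs_iterate:
  fixes G :: "'a::finite list"
  assumes "absorbs N B G" "k * CARD('a) \<le> N"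
  shows "(\<exists>W G'. G = W @ G' \<and> set W \<subseteq> B \<and> (\<forall>t. set t \<subseteq> B \<longrightarrow> length t \<le> k \<longrightarrow> subseq t W)
            \<and> absorbs (N - k * CARD('a)) B G')
       \<or> (\<exists>W G'. G = W @ G' \<and> B \<subset> set W \<and> absorbs (N - k * CARD('a)) (set W) G')"
  using assms(2)
proof (induction k)
  case 0
  show ?case using assms(1) by (intro disjI1 exI[of _ "[]"] exI[of _ G]) auto
next
  case (Suc k)
  have "k * CARD('a) \<le> N" using Suc.prems by simp
  from Suc.IH[OF this] show ?case
  proof (elim disjE exE conjE)
    fix W G' assume G: "G = W @ G'" and W: "set W \<subseteq> B"
      and univ: "\<forall>t. set t \<subseteq> B \<longrightarrow> length t \<le> k \<longrightarrow> subseq t W"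
      and abs: "absorbs (N - k * CARD('a)) B G'"
    have "CARD('a) \<le> N - k * CARD('a)" using Suc.prems by simp
    from absorbs_split[OF abs this] obtain P G'' where P: "G' = P @ G''" "B \<subseteq> set P"
      and "absorbs (N - k * CARD('a) - CARD('a)) (set P) G''" .
    then have abs': "absorbs (N - Suc k * CARD('a)) (set P) G''" by (simp add: add.commute)
    show ?case
    proof (cases "set P \<subseteq> B")
      case True
      have "subseq t (W @ P)" if "set t \<subseteq> B" "length t \<le> Suc k" for t
      proof (cases t rule: rev_cases)
        case (snoc t' a)
        then have "subseq t' W" "subseq [a] P"
          using that univ P(2) by (auto simp: subseq_singleton_left)
        then show ?thesis using snoc by (simp add: list_emb_append_mono)
      qed simp
      moreover have "set P = B" using True P(2) by blast
      ultimately show ?thesis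
        using G P(1) W abs' by (intro disjI1 exI[of _ "W @ P"] exI[of _ G'']) simp
    next
      case False
      moreover have "set (W @ P) = set P" using P(2) W by auto
      ultimately show ?thesis
        using G P W abs' by (intro disjI2 exI[of _ "W @ P"] exI[of _ G'']) auto
    qed
  next
    fix W G' assume "G = W @ G'" "B \<subset> set W" "absorbs (N - k * CARD('a)) (set W) G'"
    moreover from this(3) have "absorbs (N - Suc k * CARD('a)) (set W) G'"
      by (rule absorbs_mono) simp
    ultimately show ?case by blast
  qed
qed

lemma absorbs_imp_universal_prefix:
  fixes G :: "'a::finite list"
  assumes K: "1 \<le> K"
  shows "absorbs N B G \<Longrightarrow> (CARD('a) - card B + 1) * (K * CARD('a)) \<le> N \<Longrightarrow>
    \<exists>W G'. G = W @ G' \<and> B \<subseteq> set W \<and> universal K (set W) W"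
proof (induction "CARD('a) - card B" arbitrary: N B G rule: less_induct)
  case less
  \<comment> \<open>Each round costs K * CARD('a) and either succeeds or strictly enlarges the alphabet.\<close>
  have "K * CARD('a) \<le> N" using less.prems(2) by (simp add: le_trans)
  from absorbs_iterate[OF less.prems(1) this] show ?case
  proof (elim disjE exE conjE)
    fix W G' assume G: "G = W @ G'" and W: "set W \<subseteq> B"
      and univ: "\<forall>t. set t \<subseteq> B \<longrightarrow> length t \<le> K \<longrightarrow> subseq t W"
    have "B \<subseteq> set W"
    proof
      fix b assume "b \<in> B"
      then have "subseq [b] W" using univ K by simp
      then show "b \<in> set W" by (simp add: subseq_singleton_left)
    qed
    then have "universal K (set W) W" using W univ unfolding universal_def by auto
    then show ?thesis using G \<open>B \<subseteq> set W\<close> by blast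
  next
    fix W G' assume G: "G = W @ G'" and W: "B \<subset> set W"
      and abs: "absorbs (N - K * CARD('a)) (set W) G'"
    have "card B < card (set W)" using W by (simp add: psubset_card_mono)
    moreover have "card (set W) \<le> CARD('a)" by (rule card_mono) auto
    ultimately have less: "CARD('a) - card (set W) < CARD('a) - card B" by linarith
    then have "(CARD('a) - card (set W) + 1) * (K * CARD('a)) \<le> (CARD('a) - card B) * (K * CARD('a))"
      by (intro mult_le_mono1) linarith
    also have "\<dots> = (CARD('a) - card B + 1) * (K * CARD('a)) - K * CARD('a)"
      by simp
    also have "\<dots> \<le> N - K * CARD('a)"
      using less.prems(2) by (rule diff_le_mono)
    finally have budget: "(CARD('a) - card (set W) + 1) * (K * CARD('a)) \<le> N - K * CARD('a)" .
    from less.hyps[OF less abs budget] obtain W' G'' where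
      "G' = W' @ G''" "set W \<subseteq> set W'" "universal K (set W') W'"
      by blast
    moreover from this have "universal K (set (W @ W')) (W @ W')"
      by (simp add: universal_append_left Un_absorb1)
    ultimately show ?thesis using G W by (intro exI[of _ "W @ W'"] exI[of _ G'']) auto
  qed
qed

section \<open>Peeling off a common factorization\<close>

lemma absorbs_if_short_subseqs_eq:
  assumes "short_subseqs N (V @ G) = short_subseqs N G"
  shows "absorbs N (set V) G"
  unfolding absorbs_def
proof (intro ballI allI impI)
  fix b t assume "b \<in> set V" "subseq t G" "length t < N"
  moreover from this have "subseq ([b] @ t) (V @ G)"
    by (intro list_emb_append_mono) (auto simp: subseq_singleton_left)
  ultimately show "subseq (b # t) G" using short_subseqs_eqD[OF assms, of "b # t"] by simp
qed

lemma card_short_subseqs_append_less: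
  fixes G :: "'a::finite list"
  assumes "\<not> absorbs N (set V) G"
  shows "card (short_subseqs N G) < card (short_subseqs N (V @ G))"
proof (rule psubset_card_mono[OF finite_short_subseqs])
  show "short_subseqs N G \<subset> short_subseqs N (V @ G)"
    using assms absorbs_if_short_subseqs_eq[of N V G]
    by (auto simp: short_subseqs_def subseq_drop_many)
qed

lemma absorbs_transfer:
  assumes "short_subseqs n G1 = short_subseqs n G2" "absorbs N B G2" "N \<le> n"
  shows "absorbs N B G1"
  using assms short_subseqs_eqD[OF assms(1)] unfolding absorbs_def
  by (metis Suc_leI le_trans length_Cons less_imp_le_nat)

definition no_universal_extension :: "nat \<Rightarrow> 'a list \<Rightarrow> 'a list \<Rightarrow> bool" where
  "no_universal_extension K V G \<longleftrightarrow>
     (\<forall>W G'. G = W @ G' \<longrightarrow> W \<noteq> [] \<longrightarrow> \<not> universal K (set (V @ W)) (V @ W))"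

lemma not_absorbs_if_no_universal_extension:
  fixes G :: "'a::finite list"
  assumes "no_universal_extension K V G" "V \<noteq> []" "1 \<le> K"
    "(CARD('a) + 1) * (K * CARD('a)) \<le> N"
  shows "\<not> absorbs N (set V) G"
proof
  assume "absorbs N (set V) G"
  moreover have "(CARD('a) - card (set V) + 1) * (K * CARD('a)) \<le> N"
    using assms(4) by (meson add_le_mono1 diff_le_self le_trans mult_le_mono1)
  ultimately obtain W G' where W: "G = W @ G'" "set V \<subseteq> set W" "universal K (set W) W"
    using absorbs_imp_universal_prefix[OF assms(3)] by blast
  then have "W \<noteq> []" "universal K (set (V @ W)) (V @ W)"
    using assms(2) by (auto simp: universal_append_left Un_absorb1)
  then show False using assms(1) W(1) unfolding no_universal_extension_def by blast
qed

lemma hd_notin_if_no_universal_extension: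
  assumes "universal K (set V) V" "no_universal_extension K V G"
  shows "G = [] \<or> hd G \<notin> set V"
proof (rule ccontr)
  assume "\<not> (G = [] \<or> hd G \<notin> set V)"
  then obtain c G' where G: "G = [c] @ G'" and c: "c \<in> set V" by (cases G) auto
  have "universal K (set (V @ [c])) (V @ [c])"
    using universal_append_right[OF assms(1), of "[c]"] c by (simp add: insert_absorb)
  then show False using assms(2) G unfolding no_universal_extension_def by blast
qed

lemma universal_prefix_cases:
  assumes "Y = d # R"
  obtains V G where "Y = V @ G" "V \<noteq> []" "universal K (set V) V" "no_universal_extension K V G"
  | "no_universal_extension K [d] R"
proof -
  let ?P = "\<lambda>i. 0 < i \<and> i \<le> length Y \<and> universal K (set (take i Y)) (take i Y)"
  have P_extend: "?P (length V + length W)" if "Y = V @ W @ G'" "W \<noteq> []"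
    "universal K (set (V @ W)) (V @ W)" for V W G'
    using that by auto
  show ?thesis
  proof (cases "\<exists>i. ?P i")
    case True
    define i where "i = (GREATEST i. ?P i)"
    have bound: "\<And>j. ?P j \<Longrightarrow> j \<le> length Y" by blast
    from True obtain k where "?P k" by blast
    then have "?P i" unfolding i_def by (rule GreatestI_nat[OF _ bound])
    moreover have "no_universal_extension K (take i Y) (drop i Y)"
      unfolding no_universal_extension_def
    proof (intro allI impI notI)
      fix W G' assume "drop i Y = W @ G'" "W \<noteq> []" "universal K (set (take i Y @ W)) (take i Y @ W)"
      moreover have "length (take i Y) = i" using \<open>?P i\<close> by simp
      moreover from \<open>drop i Y = W @ G'\<close> have "Y = take i Y @ W @ G'"
        by (metis append_take_drop_id)
      ultimately have "?P (i + length W)" using P_extend[of "take i Y" W G'] by simp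
      then have "i + length W \<le> i" unfolding i_def by (rule Greatest_le_nat[OF _ bound])
      then show False using \<open>W \<noteq> []\<close> by simp
    qed
    moreover have "take i Y \<noteq> []" using \<open>?P i\<close> by auto
    ultimately show ?thesis using that(1)[of "take i Y" "drop i Y"] by simp
  next
    case False
    have "no_universal_extension K [d] R"
      unfolding no_universal_extension_def
    proof (intro allI impI notI)
      fix W G' assume "R = W @ G'" "universal K (set ([d] @ W)) ([d] @ W)"
      then have "Y = [] @ (d # W) @ G'" "universal K (set ([] @ d # W)) ([] @ d # W)"
        using assms by simp_all
      from P_extend[OF this(1) _ this(2)] have "\<exists>i. ?P i" by blast
      with False show False by contradiction
    qed
    then show ?thesis by (rule that(2))
  qed
qed

lemma subseq_Cons_append_notin:
  "subseq (a # s) (V @ G) \<Longrightarrow> a \<notin> set V \<Longrightarrow> subseq (a # s) G"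
  by (induction V) auto

text \<open>The right-hand side mentions only Y and B, not where the block ends.\<close>
lemma subseq_drop_block_iff:
  assumes Y: "Y = V @ G" and V: "set V \<subseteq> B" and G: "G = [] \<or> hd G \<notin> B"
  shows "subseq t G \<longleftrightarrow>
    t = [] \<or> (\<exists>d. d \<notin> B \<and> subseq (d # t) Y) \<or> (t \<noteq> [] \<and> hd t \<notin> B \<and> subseq t Y)"
proof
  assume t: "subseq t G"
  show "t = [] \<or> (\<exists>d. d \<notin> B \<and> subseq (d # t) Y) \<or> (t \<noteq> [] \<and> hd t \<notin> B \<and> subseq t Y)"
  proof (cases t)
    case (Cons x t')
    then obtain c G' where G': "G = c # G'" and c: "c \<notin> B" using t G by (cases G) auto
    show ?thesis
    proof (cases "x = c")
      case True
      then show ?thesis using t Cons c Y by (simp add: subseq_drop_many)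
    next
      case False
      then have "subseq (c # t) G" using t G' Cons by simp
      then have "subseq (c # t) Y" unfolding Y by (rule subseq_drop_many)
      then show ?thesis using c by blast
    qed
  qed simp
next
  assume "t = [] \<or> (\<exists>d. d \<notin> B \<and> subseq (d # t) Y) \<or> (t \<noteq> [] \<and> hd t \<notin> B \<and> subseq t Y)"
  then consider "t = []" | d where "d \<notin> B" "subseq (d # t) (V @ G)"
    | "t \<noteq> []" "hd t \<notin> B" "subseq t (V @ G)"
    using Y by blast
  then show "subseq t G"
  proof cases
    case (2 d)
    with V have "subseq (d # t) G" by (auto intro: subseq_Cons_append_notin[of _ _ V])
    then show ?thesis by (rule subseq_Cons')
  next
    case 3
    then have "subseq (hd t # tl t) (V @ G)" "hd t \<notin> set V" using V by auto
    then have "subseq (hd t # tl t) G" by (rule subseq_Cons_append_notin)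
    with 3 show ?thesis by simp
  qed simp
qed

lemma short_subseqs_eq_drop_block:
  assumes eq: "short_subseqs (Suc n) Y1 = short_subseqs (Suc n) Y2"
    and "Y1 = V1 @ G1" "set V1 \<subseteq> B" "G1 = [] \<or> hd G1 \<notin> B"
    and "Y2 = V2 @ G2" "set V2 \<subseteq> B" "G2 = [] \<or> hd G2 \<notin> B"
  shows "short_subseqs n G1 = short_subseqs n G2"
proof (rule short_subseqs_eqI)
  fix t :: "'a list" assume "length t \<le> n"
  then have "subseq (d # t) Y1 \<longleftrightarrow> subseq (d # t) Y2" "subseq t Y1 \<longleftrightarrow> subseq t Y2" for d
    using short_subseqs_eqD[OF eq] by simp_all
  then show "subseq t G1 \<longleftrightarrow> subseq t G2"
    unfolding subseq_drop_block_iff[OF assms(2-4)] subseq_drop_block_iff[OF assms(5-7)] by simp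
qed

lemma subseq_append_not_subseq_prefix:
  assumes "subseq (t @ s) (V @ G)" "\<not> subseq t V"
  shows "subseq s G"
proof -
  from assms(1) obtain x y where xy: "t @ s = x @ y" "subseq x V" "subseq y G"
    by (auto elim: subseq_appendE)
  show ?thesis
  proof (cases "length t \<le> length x")
    case True
    then have "t = take (length t) x" using xy(1) by (simp add: append_eq_append_conv_if)
    then have "prefix t x" by (metis take_is_prefix)
    then have "subseq t V" using xy(2) prefix_imp_subseq subseq_order.order_trans by blast
    then show ?thesis using assms(2) by contradiction
  next
    case False
    then have "y = drop (length x) t @ s" using xy(1) by (simp add: append_eq_append_conv_if)
    then show ?thesis using xy(3) subseq_drop_many subseq_order.order_trans by blast
  qed
qed

lemma absorbs_if_not_universal:
  fixes G1 G2 :: "'a::finite list"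
  assumes eq: "short_subseqs m (V1 @ G1) = short_subseqs m (V2 @ G2)"
    and eqG: "short_subseqs (m - 1) G1 = short_subseqs (m - 1) G2"
    and V1: "universal K B V1" and V2: "set V2 \<subseteq> B" "\<not> universal K' B V2"
    and K: "CARD('a) + K' \<le> K" "1 \<le> K'"
  shows "absorbs (m - K) B G2"
proof -
  obtain t0 where t0: "set t0 \<subseteq> B" "length t0 \<le> K'" "\<not> subseq t0 V2"
  proof (cases "set V2 = B")
    case True
    then show ?thesis using V2(2) that unfolding universal_def by blast
  next
    case False
    then obtain b where "b \<in> B" "b \<notin> set V2" using V2(1) by blast
    then show ?thesis using that[of "[b]"] K(2) by (simp add: subseq_singleton_left)
  qed
  obtain z where z: "set z = B" "length z \<le> CARD('a)" by (rule obtain_enumeration)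
  have "subseq (t0 @ z) V1" using V1 t0 z K(1) unfolding universal_def by simp
  show ?thesis
    unfolding absorbs_def
  proof (intro ballI allI impI)
    fix b g assume b: "b \<in> B" and g: "subseq g G2" "length g < m - K"
    then have "subseq g G1" using short_subseqs_eqD[OF eqG, of g] by simp
    with \<open>subseq (t0 @ z) V1\<close> have "subseq ((t0 @ z) @ g) (V1 @ G1)"
      by (rule list_emb_append_mono)
    moreover have "length ((t0 @ z) @ g) \<le> m" using t0(2) z(2) g(2) K(1) by simp
    ultimately have "subseq ((t0 @ z) @ g) (V2 @ G2)" using short_subseqs_eqD[OF eq] by blast
    then have "subseq (t0 @ z @ g) (V2 @ G2)" by simp
    then have "subseq (z @ g) G2" using t0(3) by (rule subseq_append_not_subseq_prefix)
    moreover have "subseq (b # g) (z @ g)"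
      using b z(1) list_emb_append_mono[of "(=)" "[b]" z g g] by (simp add: subseq_singleton_left)
    ultimately show "subseq (b # g) G2" using subseq_order.order_trans by blast
  qed
qed

lemma block_step:
  fixes G1 Y2 :: "'a::finite list"
  assumes eq: "short_subseqs m (V1 @ G1) = short_subseqs m Y2"
    and V1: "universal K B V1" and G1: "G1 = [] \<or> hd G1 \<notin> B"
    and not_abs: "\<not> absorbs (m - K) B G1"
    and K: "CARD('a) + K' \<le> K" "1 \<le> K'"
  obtains V2 G2 where "Y2 = V2 @ G2" "universal K' B V2"
    "short_subseqs (m - 1) G1 = short_subseqs (m - 1) G2"
proof -
  have "K < m" using not_abs unfolding absorbs_def by auto
  define V2 where "V2 = takeWhile (\<lambda>x. x \<in> B) Y2"
  define G2 where "G2 = dropWhile (\<lambda>x. x \<in> B) Y2"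
  have Y2: "Y2 = V2 @ G2" and V2: "set V2 \<subseteq> B"
    unfolding V2_def G2_def by (auto dest: set_takeWhileD)
  have G2: "G2 = [] \<or> hd G2 \<notin> B" unfolding G2_def by (metis hd_dropWhile)
  have eq': "short_subseqs (Suc (m - 1)) (V1 @ G1) = short_subseqs (Suc (m - 1)) Y2"
    using eq \<open>K < m\<close> by simp
  have eqG: "short_subseqs (m - 1) G1 = short_subseqs (m - 1) G2"
    using V1 G1 V2 G2 Y2 unfolding universal_def
    by (intro short_subseqs_eq_drop_block[OF eq' refl _ G1 Y2 V2 G2]) simp
  have "universal K' B V2"
  proof (rule ccontr)
    assume "\<not> universal K' B V2"
    with eq Y2 have "absorbs (m - K) B G2"
      using absorbs_if_not_universal[OF _ eqG V1 V2] K by simp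
    then have "absorbs (m - K) B G1" using absorbs_transfer[OF eqG] K by simp
    with not_abs show False by contradiction
  qed
  with Y2 eqG that show ?thesis by blast
qed

lemma letter_step:
  assumes eq: "short_subseqs m (d # R1) = short_subseqs m Y2"
    and not_abs: "\<not> absorbs (m - 1) {d} R1"
  obtains R2 where "Y2 = d # R2" "short_subseqs (m - 1) R1 = short_subseqs (m - 1) R2"
proof -
  have m: "Suc (m - 1) = m" using not_abs unfolding absorbs_def by auto
  have eqD: "subseq t (d # R1) \<longleftrightarrow> subseq t Y2" if "length t \<le> m" for t
    using short_subseqs_eqD[OF eq that] .
  obtain e R2 where Y2: "Y2 = e # R2"
    using eqD[of "[d]"] m by (cases Y2) auto
  \<comment> \<open>Otherwise d would be absorbed by R1: any d t in R1 lifts to e d t in Y2, hence in d R1.\<close>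
  have "e = d"
  proof (rule ccontr)
    assume ne: "e \<noteq> d"
    have "absorbs (m - 1) {d} R1"
      unfolding absorbs_def
    proof (intro ballI allI impI)
      fix b t assume b: "b \<in> {d}" and t: "subseq t R1" "length t < m - 1"
      then have "subseq (d # t) Y2" using eqD[of "d # t"] by simp
      then have "subseq (e # d # t) Y2" using Y2 ne by simp
      then have "subseq (e # d # t) R1" using eqD[of "e # d # t"] t(2) ne by simp
      then show "subseq (b # t) R1" using b subseq_Cons' by fastforce
    qed
    with not_abs show False by contradiction
  qed
  with eq Y2 m have "short_subseqs (m - 1) R1 = short_subseqs (m - 1) R2"
    using short_subseqs_eq_Cons_cancel[of "m - 1" d R1 R2] by simp
  with Y2 \<open>e = d\<close> that show ?thesis by blast
qed

lemma peel_step: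
  fixes Y1 Y2 :: "'a::finite list"
  assumes K: "CARD('a) + 1 \<le> K" and N: "(CARD('a) + 1) * (K * CARD('a)) \<le> N"
    and eq: "short_subseqs m Y1 = short_subseqs m Y2" and budget: "N + K \<le> m"
    and Y1: "Y1 = d # R1"
  obtains (block) V1 G1 V2 G2 where "Y1 = V1 @ G1" "V1 \<noteq> []" "Y2 = V2 @ G2"
      "universal K (set V1) V1" "universal (K - CARD('a)) (set V1) V2"
      "short_subseqs (m - 1) G1 = short_subseqs (m - 1) G2"
      "card (short_subseqs N G1) < card (short_subseqs N Y1)"
  | (letter) R2 where "Y2 = d # R2" "short_subseqs (m - 1) R1 = short_subseqs (m - 1) R2"
      "card (short_subseqs N R1) < card (short_subseqs N Y1)"
proof -
  have K': "CARD('a) + (K - CARD('a)) \<le> K" "1 \<le> K - CARD('a)" "1 \<le> K" using K by auto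
  from Y1 show ?thesis
  proof (cases rule: universal_prefix_cases[where K = K])
    case (1 V1 G1)
    have not_abs: "\<not> absorbs N (set V1) G1"
      using not_absorbs_if_no_universal_extension[OF 1(4) 1(2) K'(3) N] .
    moreover have "N \<le> m - K" using budget by simp
    ultimately have not_abs': "\<not> absorbs (m - K) (set V1) G1"
      using absorbs_mono[of "m - K" _ _ N] by blast
    have eq': "short_subseqs m (V1 @ G1) = short_subseqs m Y2" using eq 1(1) by simp
    obtain V2 G2 where "Y2 = V2 @ G2" "universal (K - CARD('a)) (set V1) V2"
      "short_subseqs (m - 1) G1 = short_subseqs (m - 1) G2"
      by (rule block_step[OF eq' 1(3) hd_notin_if_no_universal_extension[OF 1(3,4)] not_abs' K'(1,2)])
    moreover have "card (short_subseqs N G1) < card (short_subseqs N Y1)"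
      using card_short_subseqs_append_less[OF not_abs] 1(1) by simp
    ultimately show ?thesis using block 1(1-3) by blast
  next
    case 2
    have not_abs: "\<not> absorbs N (set [d]) R1"
      using not_absorbs_if_no_universal_extension[OF 2 _ K'(3) N] by simp
    moreover have "N \<le> m - 1" using budget K'(3) by simp
    ultimately have not_abs': "\<not> absorbs (m - 1) {d} R1" using absorbs_mono[of "m - 1" _ _ N] by auto
    have eq': "short_subseqs m (d # R1) = short_subseqs m Y2" using eq Y1 by simp
    obtain R2 where "Y2 = d # R2" "short_subseqs (m - 1) R1 = short_subseqs (m - 1) R2"
      by (rule letter_step[OF eq' not_abs'])
    moreover have "card (short_subseqs N R1) < card (short_subseqs N Y1)"
      using card_short_subseqs_append_less[OF not_abs] Y1 by simp
    ultimately show ?thesis using letter by blast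
  qed
qed

lemma common_factorization:
  fixes Y1 Y2 :: "'a::finite list"
  assumes K: "CARD('a) + 1 \<le> K" and N: "(CARD('a) + 1) * (K * CARD('a)) \<le> N"
  shows "short_subseqs m Y1 = short_subseqs m Y2 \<Longrightarrow> N + K + card (short_subseqs N Y1) \<le> m \<Longrightarrow>
    \<exists>us Bs. factorizes K us Bs Y1 \<and> factorizes (K - CARD('a)) us Bs Y2 \<and> (\<forall>B\<in>set Bs. B \<noteq> {})"
proof (induction "length Y1" arbitrary: Y1 Y2 m rule: less_induct)
  case less
  \<comment> \<open>Each step costs one unit of m and one short subsequence of the remainder of Y1.\<close>
  show ?case
  proof (cases Y1)
    case Nil
    have "Y2 = []"
    proof (rule ccontr)
      assume "Y2 \<noteq> []"
      then have "subseq [hd Y2] Y2" by (cases Y2) auto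
      then show False using short_subseqs_eqD[OF less.prems(1), of "[hd Y2]"] less.prems(2) K Nil
        by simp
    qed
    then show ?thesis using Nil by (intro exI[of _ "[[]]"] exI[of _ "[]"]) simp
  next
    case (Cons d R1)
    have "N + K \<le> m" using less.prems(2) by simp
    from K N less.prems(1) this Cons show ?thesis
    proof (cases rule: peel_step)
      case (block V1 G1 V2 G2)
      have "length G1 < length Y1" using block(1,2) by simp
      moreover have "N + K + card (short_subseqs N G1) \<le> m - 1" using block(7) less.prems(2) by linarith
      ultimately obtain us Bs where IH: "factorizes K us Bs G1" "factorizes (K - CARD('a)) us Bs G2"
        "\<forall>B\<in>set Bs. B \<noteq> {}"
        using less.hyps[OF _ block(6)] by blast
      show ?thesis
        using factorizes_universal_Cons[OF block(4) IH(1)] factorizes_universal_Cons[OF block(5) IH(2)]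
          IH(3) block(1-3) by (intro exI[of _ "[] # us"] exI[of _ "set V1 # Bs"]) auto
    next
      case (letter R2)
      have "length R1 < length Y1" using Cons by simp
      moreover have "N + K + card (short_subseqs N R1) \<le> m - 1" using letter(3) less.prems(2) by linarith
      ultimately obtain us Bs where IH: "factorizes K us Bs R1" "factorizes (K - CARD('a)) us Bs R2"
        "\<forall>B\<in>set Bs. B \<noteq> {}"
        using less.hyps[OF _ letter(2)] by blast
      show ?thesis
        using factorizes_Cons[OF IH(1), of d] factorizes_Cons[OF IH(2), of d] IH(3) Cons letter(1)
        by (intro exI[of _ "(d # hd us) # tl us"] exI[of _ Bs]) simp
    qed
  qed
qed

lemma not_PT_separable_imp_common_pattern:
  fixes M1 :: "('s1, 'a::finite) nfa" and M2 :: "('s2, 'a) nfa"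
  assumes wf: "nfa_wf M1" "nfa_wf M2" and not_sep: "\<not> PT_separable (lang M1) (lang M2)"
  obtains us Bs where "fact_pattern us Bs" "admits_pattern_path M1 us Bs" "admits_pattern_path M2 us Bs"
proof -
  define K where "K = CARD('a) * (card (states M1) + card (states M2) + 2) + CARD('a) + 1"
  define N where "N = (CARD('a) + 1) * (K * CARD('a))"
  define m where "m = N + K + card {t :: 'a list. length t \<le> N}"
  obtain w1 w2 where w: "w1 \<in> lang M1" "w2 \<in> lang M2" "short_subseqs m w1 = short_subseqs m w2"
    by (rule not_PT_separable_imp_short_subseqs_eq[OF not_sep])
  have "card (short_subseqs N w1) \<le> card {t :: 'a list. length t \<le> N}"
    by (rule card_mono[OF finite_lists_length_le_UNIV]) (auto simp: short_subseqs_def)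
  then have budget: "N + K + card (short_subseqs N w1) \<le> m" unfolding m_def by simp
  have K: "CARD('a) + 1 \<le> K" and N: "(CARD('a) + 1) * (K * CARD('a)) \<le> N"
    unfolding K_def N_def by simp_all
  obtain us Bs where
    f: "factorizes K us Bs w1" "factorizes (K - CARD('a)) us Bs w2" and Bs: "\<forall>B\<in>set Bs. B \<noteq> {}"
    using common_factorization[OF K N w(3) budget] by blast
  have k1: "CARD('a) * (card (states M1) + 2) \<le> K - CARD('a)"
    and k2: "CARD('a) * (card (states M2) + 2) \<le> K - CARD('a)"
    unfolding K_def by (simp_all add: algebra_simps)
  obtain s1 f1 where s1: "s1 \<in> init M1" "f1 \<in> final M1" "run M1 s1 w1 f1"
    using w(1) unfolding lang_def by blast
  obtain s2 f2 where s2: "s2 \<in> init M2" "f2 \<in> final M2" "run M2 s2 w2 f2"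
    using w(2) unfolding lang_def by blast
  have "pattern_path M1 s1 us Bs"
    using factorizes_imp_pattern_path[OF wf(1) factorizes_mono[OF f(1) diff_le_self] k1 Bs s1(3,2)] .
  moreover have "pattern_path M2 s2 us Bs"
    using factorizes_imp_pattern_path[OF wf(2) f(2) k2 Bs s2(3,2)] .
  moreover have "fact_pattern us Bs"
    unfolding fact_pattern_def using factorizes_length[OF f(1)] Bs by simp
  ultimately show ?thesis using that[of us Bs] s1(1) s2(1) unfolding admits_pattern_path_def by blast
qed

theorem proposition2:
  fixes M1 :: "('s1, 'a::finite) nfa" and M2 :: "('s2, 'a) nfa"
  assumes "nfa_wf M1" and "nfa_wf M2"
  shows "\<not> PT_separable (lang M1) (lang M2) \<longleftrightarrow>
         (\<exists>us Bs. fact_pattern us Bs \<and> admits_pattern_path M1 us Bs \<and> admits_pattern_path M2 us Bs)"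
proof
  assume "\<not> PT_separable (lang M1) (lang M2)"
  then obtain us Bs where "fact_pattern us Bs" "admits_pattern_path M1 us Bs" "admits_pattern_path M2 us Bs"
    by (rule not_PT_separable_imp_common_pattern[OF assms])
  then show "\<exists>us Bs. fact_pattern us Bs \<and> admits_pattern_path M1 us Bs \<and> admits_pattern_path M2 us Bs"
    by blast
next
  assume "\<exists>us Bs. fact_pattern us Bs \<and> admits_pattern_path M1 us Bs \<and> admits_pattern_path M2 us Bs"
  then obtain us Bs where "admits_pattern_path M1 us Bs" "admits_pattern_path M2 us Bs" by blast
  then show "\<not> PT_separable (lang M1) (lang M2)" by (rule common_pattern_imp_not_PT_separable)
qed

end
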